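(* Let $\epsilon\neq 0$ be a constant. Let the functions $m^i_{\ e}$ ($3\le i\le e\le N$, with $m^i_{\ e}=0$ for $e<i$ and $m^i_{\ i}>0$) be smooth functions of the variables $(x^3-\epsilon u, x^4,\dots,x^N)$ only. Put $g_{ef}=\sum_i m^i_{\ e}m^i_{\ f}$ and write $m_{33}=m^3_{\ 3}$. Let the following be arbitrary smooth functions: - $H(u,x^3,\dots,x^N)$; - $F_2$ and $E_n$ ($n=4,\dots,N$), functions of $(x^3-\epsilon u,x^4,\dots,x^N)$; - $f(x^3,\dots,x^N)$. Let $\Phi(u,x^3,\dots,x^N)$ be any smooth function with $\partial_u\Phi = \partial_3 H$, and fix $u_0$. Define $$\hat W_3 = \Phi + \epsilon^{-1}\big(F_2+f\big),\qquad L_n = \partial_nH + \epsilon\,\partial_n\Phi+\partial_n f,$$ $$\hat W_n(u,x)=\int_{u_0}^{u} L_n(z,x^3-\epsilon u+\epsilon z,x^4,\dots,x^N)\,dz+E_n(x^3-\epsilon u,x^4,\dots,x^N).$$ Then the vector field $$X = n + F_2\,\ell+\epsilon\, m_{33}\, m_3$$ is a Killing vector field of the metric $g = 2\,du\,\big(dv + H\,du + \hat W_e\,dx^e\big) + g_{ef}\,dx^e dx^f$, with $$g(X,X) = 2F_2+\epsilon^2 m_{33}^{\,2}.$$ In particular, for any choice of $F_2\le -\tfrac12\epsilon^2m_{33}^{\,2}$ (possible because $F_2$ and $m_{33}$ depend on the same variables), $X$ is everywhere timelike or null.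
   Context: Work on an open set with coordinates $(u,v,x^3,\dots,x^N)$, $N\ge 3$. The indices $e,f$ run over $3,\dots,N$ and are summed, and the indices $n,m$ run over $4,\dots,N$. Derivatives are written $\partial_u=\partial/\partial u$ and $\partial_e=\partial/\partial x^e$. The frame vectors associated with the metric $g$ above are $$\ell=\partial_v,\qquad n=\partial_u - H\,\partial_v,\qquad m_i = m_i^{\ e}\big(\partial_e-\hat W_e\,\partial_v\big),$$ where $m_i^{\ e}$ is the inverse of the matrix $(m^i_{\ e})$, i.e. $\sum_e m^i_{\ e}m_j^{\ e}=\delta_{ij}$. Since $(m^i_{\ e})$ is upper triangular, $m_3 = m_{33}^{-1}\big(\partial_3 - \hat W_3\,\partial_v\big)$. For a vector field $X = X_1 n+X_2\ell+\sum_i X_im_i$ one has $g(X,X) = 2X_1X_2+\sum_i X_i^2$. *)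

theory Defs
  imports "HOL-Analysis.Analysis"
begin

text \<open>Points of coordinate space are functions nat => real.  Coordinate 1 is u,
coordinate 2 is v, coordinates 3..N are x^3..x^N.  For a finite index set I,
RN I is the copy of R^I inside nat => real (all other coordinates are 0).\<close>

definition RN :: "nat set \<Rightarrow> (nat \<Rightarrow> real) set" where
  "RN I = {p. \<forall>i. i \<notin> I \<longrightarrow> p i = 0}"

definition pd :: "nat \<Rightarrow> ((nat \<Rightarrow> real) \<Rightarrow> real) \<Rightarrow> (nat \<Rightarrow> real) \<Rightarrow> real" where
  "pd j F p = deriv (\<lambda>t. F (p(j := t))) (p j)"

fun iter_pd :: "nat list \<Rightarrow> ((nat \<Rightarrow> real) \<Rightarrow> real) \<Rightarrow> (nat \<Rightarrow> real) \<Rightarrow> real" where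
  "iter_pd [] F = F"
| "iter_pd (j # js) F = pd j (iter_pd js F)"

definition smooth_on_coords :: "nat set \<Rightarrow> ((nat \<Rightarrow> real) \<Rightarrow> real) \<Rightarrow> bool" where
  "smooth_on_coords I F \<longleftrightarrow>
     (\<forall>js. set js \<subseteq> I \<longrightarrow>
        continuous_on (RN I) (iter_pd js F) \<and>
        (\<forall>j\<in>I. \<forall>p\<in>RN I. (\<lambda>t. iter_pd js F (p(j := t))) differentiable (at (p j))))"

text \<open>Projections: (u,x^3..x^N), (x^3..x^N), and (x^3 - eps u, x^4..x^N)
(the latter stored in slots 3..N).\<close>
definition noV :: "nat \<Rightarrow> (nat \<Rightarrow> real) \<Rightarrow> nat \<Rightarrow> real" where
  "noV N p = (\<lambda>j. if j = 1 \<or> j \<in> {3..N} then p j else 0)"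

definition xs :: "nat \<Rightarrow> (nat \<Rightarrow> real) \<Rightarrow> nat \<Rightarrow> real" where
  "xs N p = (\<lambda>j. if j \<in> {3..N} then p j else 0)"

definition sh :: "nat \<Rightarrow> real \<Rightarrow> (nat \<Rightarrow> real) \<Rightarrow> nat \<Rightarrow> real" where
  "sh N \<epsilon> p = (\<lambda>j. if j = 3 then p 3 - \<epsilon> * p 1 else if j \<in> {4..N} then p j else 0)"

definition W3 :: "nat \<Rightarrow> real \<Rightarrow> ((nat \<Rightarrow> real) \<Rightarrow> real) \<Rightarrow> ((nat \<Rightarrow> real) \<Rightarrow> real)
    \<Rightarrow> ((nat \<Rightarrow> real) \<Rightarrow> real) \<Rightarrow> (nat \<Rightarrow> real) \<Rightarrow> real" where
  "W3 N \<epsilon> F2 f \<Phi> p = \<Phi> (noV N p) + (F2 (sh N \<epsilon> p) + f (xs N p)) / \<epsilon>"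

definition Ln :: "nat \<Rightarrow> real \<Rightarrow> ((nat \<Rightarrow> real) \<Rightarrow> real) \<Rightarrow> ((nat \<Rightarrow> real) \<Rightarrow> real)
    \<Rightarrow> ((nat \<Rightarrow> real) \<Rightarrow> real) \<Rightarrow> nat \<Rightarrow> (nat \<Rightarrow> real) \<Rightarrow> real" where
  "Ln N \<epsilon> H \<Phi> f n q = pd n H q + \<epsilon> * pd n \<Phi> q + pd n (\<lambda>r. f (xs N r)) q"

definition Wn :: "nat \<Rightarrow> real \<Rightarrow> ((nat \<Rightarrow> real) \<Rightarrow> real) \<Rightarrow> ((nat \<Rightarrow> real) \<Rightarrow> real)
    \<Rightarrow> ((nat \<Rightarrow> real) \<Rightarrow> real) \<Rightarrow> (nat \<Rightarrow> (nat \<Rightarrow> real) \<Rightarrow> real) \<Rightarrow> real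
    \<Rightarrow> nat \<Rightarrow> (nat \<Rightarrow> real) \<Rightarrow> real" where
  "Wn N \<epsilon> H \<Phi> f E u0 n p =
     (LBINT z=u0..p 1. Ln N \<epsilon> H \<Phi> f n
        (\<lambda>j. if j = 1 then z else if j = 3 then p 3 - \<epsilon> * p 1 + \<epsilon> * z
             else if j \<in> {4..N} then p j else 0))
     + E n (sh N \<epsilon> p)"

definition What :: "nat \<Rightarrow> real \<Rightarrow> ((nat \<Rightarrow> real) \<Rightarrow> real) \<Rightarrow> ((nat \<Rightarrow> real) \<Rightarrow> real)
    \<Rightarrow> ((nat \<Rightarrow> real) \<Rightarrow> real) \<Rightarrow> ((nat \<Rightarrow> real) \<Rightarrow> real) \<Rightarrow> (nat \<Rightarrow> (nat \<Rightarrow> real) \<Rightarrow> real)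
    \<Rightarrow> real \<Rightarrow> nat \<Rightarrow> (nat \<Rightarrow> real) \<Rightarrow> real" where
  "What N \<epsilon> H F2 f \<Phi> E u0 e p =
     (if e = 3 then W3 N \<epsilon> F2 f \<Phi> p else Wn N \<epsilon> H \<Phi> f E u0 e p)"

text \<open>Components g_ab of the metric
 g = 2 du (dv + H du + hatW_e dx^e) + g_ef dx^e dx^f,  g_ef = sum_i m^i_e m^i_f.
Index 1 = u, 2 = v, 3..N = x^e.\<close>
definition gmet :: "nat \<Rightarrow> real \<Rightarrow> (nat \<Rightarrow> nat \<Rightarrow> (nat \<Rightarrow> real) \<Rightarrow> real)
    \<Rightarrow> ((nat \<Rightarrow> real) \<Rightarrow> real) \<Rightarrow> ((nat \<Rightarrow> real) \<Rightarrow> real)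
    \<Rightarrow> ((nat \<Rightarrow> real) \<Rightarrow> real) \<Rightarrow> ((nat \<Rightarrow> real) \<Rightarrow> real) \<Rightarrow> (nat \<Rightarrow> (nat \<Rightarrow> real) \<Rightarrow> real)
    \<Rightarrow> real \<Rightarrow> nat \<Rightarrow> nat \<Rightarrow> (nat \<Rightarrow> real) \<Rightarrow> real" where
  "gmet N \<epsilon> m H F2 f \<Phi> E u0 a b p =
     (if a = 1 \<and> b = 1 then 2 * H (noV N p)
      else if (a = 1 \<and> b = 2) \<or> (a = 2 \<and> b = 1) then 1
      else if a = 1 \<and> b \<in> {3..N} then What N \<epsilon> H F2 f \<Phi> E u0 b p
      else if b = 1 \<and> a \<in> {3..N} then What N \<epsilon> H F2 f \<Phi> E u0 a p
      else if a \<in> {3..N} \<and> b \<in> {3..N} then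
        (\<Sum>i\<in>{3..N}. m i a (sh N \<epsilon> p) * m i b (sh N \<epsilon> p))
      else 0)"

definition ellv :: "(nat \<Rightarrow> real) \<Rightarrow> nat \<Rightarrow> real" where
  "ellv p = (\<lambda>a. if a = 2 then 1 else 0)"

definition nv :: "nat \<Rightarrow> ((nat \<Rightarrow> real) \<Rightarrow> real) \<Rightarrow> (nat \<Rightarrow> real) \<Rightarrow> nat \<Rightarrow> real" where
  "nv N H p = (\<lambda>a. if a = 1 then 1 else if a = 2 then - H (noV N p) else 0)"

definition m3v :: "nat \<Rightarrow> real \<Rightarrow> (nat \<Rightarrow> nat \<Rightarrow> (nat \<Rightarrow> real) \<Rightarrow> real)
    \<Rightarrow> ((nat \<Rightarrow> real) \<Rightarrow> real) \<Rightarrow> ((nat \<Rightarrow> real) \<Rightarrow> real) \<Rightarrow> ((nat \<Rightarrow> real) \<Rightarrow> real)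
    \<Rightarrow> (nat \<Rightarrow> real) \<Rightarrow> nat \<Rightarrow> real" where
  "m3v N \<epsilon> m F2 f \<Phi> p = (\<lambda>a. (1 / m 3 3 (sh N \<epsilon> p)) *
      (if a = 3 then 1 else if a = 2 then - W3 N \<epsilon> F2 f \<Phi> p else 0))"

definition Xv :: "nat \<Rightarrow> real \<Rightarrow> (nat \<Rightarrow> nat \<Rightarrow> (nat \<Rightarrow> real) \<Rightarrow> real)
    \<Rightarrow> ((nat \<Rightarrow> real) \<Rightarrow> real) \<Rightarrow> ((nat \<Rightarrow> real) \<Rightarrow> real) \<Rightarrow> ((nat \<Rightarrow> real) \<Rightarrow> real)
    \<Rightarrow> ((nat \<Rightarrow> real) \<Rightarrow> real) \<Rightarrow> (nat \<Rightarrow> real) \<Rightarrow> nat \<Rightarrow> real" where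
  "Xv N \<epsilon> m H F2 f \<Phi> p = (\<lambda>a. nv N H p a + F2 (sh N \<epsilon> p) * ellv p a
      + \<epsilon> * m 3 3 (sh N \<epsilon> p) * m3v N \<epsilon> m F2 f \<Phi> p a)"

definition killing :: "nat \<Rightarrow> (nat \<Rightarrow> nat \<Rightarrow> (nat \<Rightarrow> real) \<Rightarrow> real)
    \<Rightarrow> ((nat \<Rightarrow> real) \<Rightarrow> nat \<Rightarrow> real) \<Rightarrow> bool" where
  "killing N g X \<longleftrightarrow>
     (\<forall>p\<in>RN {1..N}. \<forall>a\<in>{1..N}. \<forall>b\<in>{1..N}.
        (\<Sum>c\<in>{1..N}. X p c * pd c (g a b) p
            + g c b p * pd a (\<lambda>q. X q c) p
            + g a c p * pd b (\<lambda>q. X q c) p) = 0)"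

definition gnorm :: "nat \<Rightarrow> (nat \<Rightarrow> nat \<Rightarrow> (nat \<Rightarrow> real) \<Rightarrow> real)
    \<Rightarrow> ((nat \<Rightarrow> real) \<Rightarrow> nat \<Rightarrow> real) \<Rightarrow> (nat \<Rightarrow> real) \<Rightarrow> real" where
  "gnorm N g X p = (\<Sum>a\<in>{1..N}. \<Sum>b\<in>{1..N}. g a b p * X p a * X p b)"

end

theory Submission
  imports Defs
begin

(* In coordinates (u,v,x^3..x^N) = indices (1,2,3..N) the field X = n + F_2 l + eps m_33 m_3 is
   X = d_u + eps d_3 - K d_v with K = H + eps Phi + f.  As X^u, X^3 are constant and X^v does not
   depend on v, the Killing equation (L_X g)_ab = 0 reduces to the transport identity
     (d_u + eps d_3) g_ab = g_vb d_a K + g_av d_b K.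
   Functions of the shifted coordinates (x^3 - eps u, x^4..x^N) are annihilated by d_u + eps d_3,
   which settles the block g_ef; for g_uu = 2H the identity is the hypothesis d_u Phi = d_3 H; for
   g_u3 = hatW_3 it follows by direct differentiation, and for g_un = hatW_n because hatW_n
   integrates L_n along the characteristic lines of d_u + eps d_3 (fundamental theorem of
   calculus plus differentiation under the integral sign). *)

section \<open>Integrals with variable limits and parameters\<close>

text \<open>The oriented interval integral of a continuous function as a difference of
  Henstock--Kurzweil integrals; this lets us reuse the Leibniz rule for the latter.\<close>
lemma interval_lebesgue_integral_eq_integral_diff:
  fixes g :: "real \<Rightarrow> real" and a b :: real
  assumes "continuous_on UNIV g"
  shows "(LBINT z=a..b. g z) = integral {a..b} g - integral {b..a} g"
proof (cases "a \<le> b")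
  case True
  have "(LBINT z=a..b. g z) = integral {a..b} g"
    by (rule interval_integral_eq_integral[OF True borel_integrable_atLeastAtMost'])
       (rule continuous_on_subset[OF assms], simp)
  moreover have "integral {b..a} g = 0" using True
    by (cases "a = b") auto
  ultimately show ?thesis by simp
next
  case False
  have "(LBINT z=b..a. g z) = integral {b..a} g"
    by (rule interval_integral_eq_integral[OF _ borel_integrable_atLeastAtMost'])
       (use False in simp, rule continuous_on_subset[OF assms], simp)
  moreover have "integral {a..b} g = 0" using False by simp
  ultimately show ?thesis by (simp add: interval_integral_endpoints_reverse[of a b])
qed

lemma interval_integral_upper_limit_DERIV:
  fixes g :: "real \<Rightarrow> real" and c x :: real
  assumes "continuous_on UNIV g"
  shows "((\<lambda>y::real. LBINT z=c..y. g z) has_real_derivative g x) (at x)"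
proof -
  define a where "a = min c x - 1"
  define b where "b = max c x + 1"
  have "((\<lambda>y::real. LBINT z=c..y. g z) has_vector_derivative g x) (at x within {a..b})"
    by (rule interval_integral_FTC2) (auto simp: a_def b_def intro: continuous_on_subset[OF assms])
  then have "((\<lambda>y::real. LBINT z=c..y. g z) has_vector_derivative g x) (at x within {a<..<b})"
    by (rule has_vector_derivative_within_subset) auto
  then have "((\<lambda>y::real. LBINT z=c..y. g z) has_vector_derivative g x) (at x)"
    by (subst (asm) has_vector_derivative_within_open) (auto simp: a_def b_def)
  then show ?thesis by (simp add: has_real_derivative_iff_has_vector_derivative)
qed

lemma interval_integral_parameter_DERIV:
  fixes h hs :: "real \<Rightarrow> real \<Rightarrow> real" and a b s0 :: real
  assumes hc: "continuous_on UNIV (\<lambda>(z,s). h z s)"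
    and hsd: "\<And>z s. ((\<lambda>s. h z s) has_real_derivative hs z s) (at s)"
    and hsc: "continuous_on UNIV (\<lambda>(z,s). hs z s)"
  shows "((\<lambda>s. LBINT z=a..b. h z s) has_real_derivative (LBINT z=a..b. hs z s0)) (at s0)"
proof -
  have c1: "continuous_on UNIV (\<lambda>z. h z s)" for s
    by (rule continuous_on_compose2[OF hc, where f="\<lambda>z. (z,s)", simplified])
       (auto intro!: continuous_intros)
  have c2: "continuous_on UNIV (\<lambda>z. hs z s)" for s
    by (rule continuous_on_compose2[OF hsc, where f="\<lambda>z. (z,s)", simplified])
       (auto intro!: continuous_intros)
  have hs_swapped: "continuous_on (UNIV \<times> cbox c d) (\<lambda>(x, t). hs t x)" for c d :: real
  proof -
    have "continuous_on UNIV ((\<lambda>(z,s). hs z s) \<circ> (\<lambda>(x,t). (t,x)))"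
      by (intro continuous_on_compose continuous_on_subset[OF hsc])
         (auto intro!: continuous_intros simp: split_beta)
    moreover have "(\<lambda>(z,s). hs z s) \<circ> (\<lambda>(x,t). (t,x)) = (\<lambda>(x,t). hs t x)"
      by (auto simp: fun_eq_iff)
    ultimately show ?thesis using continuous_on_subset by fastforce
  qed
  have box: "((\<lambda>s. integral (cbox c d) (\<lambda>z. h z s)) has_real_derivative
      integral (cbox c d) (\<lambda>z. hs z s0)) (at s0)" for c d :: real
  proof -
    have "((\<lambda>s. integral (cbox c d) (\<lambda>z. h z s)) has_field_derivative
        integral (cbox c d) (\<lambda>z. hs z s0)) (at s0 within UNIV)"
    proof (rule leibniz_rule_field_derivative)
      show "\<And>x. x \<in> UNIV \<Longrightarrow> (\<lambda>z. h z x) integrable_on cbox c d"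
        by (intro integrable_continuous continuous_on_subset[OF c1]) auto
    qed (use hsd hs_swapped in auto)
    then show ?thesis by simp
  qed
  have "(\<lambda>s. LBINT z=a..b. h z s)
      = (\<lambda>s. integral (cbox a b) (\<lambda>z. h z s) - integral (cbox b a) (\<lambda>z. h z s))"
    by (auto simp: interval_lebesgue_integral_eq_integral_diff[OF c1])
  then show ?thesis
    unfolding interval_lebesgue_integral_eq_integral_diff[OF c2]
    using DERIV_diff[OF box box] by simp
qed

lemma interval_integral_moving_DERIV:
  fixes h hs :: "real \<Rightarrow> real \<Rightarrow> real" and u0 c e t0 :: real
  assumes hc: "continuous_on UNIV (\<lambda>(z,s). h z s)"
    and hsd: "\<And>z s. ((\<lambda>s. h z s) has_real_derivative hs z s) (at s)"
    and hsc: "continuous_on UNIV (\<lambda>(z,s). hs z s)"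
  shows "((\<lambda>t::real. LBINT z=u0..t. h z (c - e*t)) has_real_derivative
     (h t0 (c - e*t0) - e * (LBINT z=u0..t0. hs z (c - e*t0)))) (at t0)"
proof -
  define s0 where "s0 = c - e*t0"
  define Bs where "Bs = (LBINT z=u0..t0. hs z s0)"
  have c1: "continuous_on UNIV (\<lambda>z. h z s)" for s
    by (rule continuous_on_compose2[OF hc, where f="\<lambda>z. (z,s)", simplified])
       (auto intro!: continuous_intros)
  have h_at: "continuous (at (s0,t0)) (\<lambda>(x,t). h t x)"
  proof -
    have "continuous_on UNIV ((\<lambda>(z,s). h z s) \<circ> (\<lambda>(x,t). (t,x)))"
      by (intro continuous_on_compose continuous_on_subset[OF hc])
         (auto intro!: continuous_intros simp: split_beta)
    moreover have "(\<lambda>(z,s). h z s) \<circ> (\<lambda>(x,t). (t,x)) = (\<lambda>(x,t). h t x)"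
      by (auto simp: fun_eq_iff)
    ultimately show ?thesis by (simp add: continuous_on_eq_continuous_at)
  qed
  have hcont: "continuous (at (s0, t0) within UNIV \<times> UNIV) (\<lambda>(x, y). blinfun_mult_right (h y x))"
  proof -
    have "continuous (at (s0,t0)) (\<lambda>p. blinfun_mult_right ((\<lambda>(x,t). h t x) p))"
      using h_at by (intro continuous_intros)
    moreover have "(\<lambda>p. blinfun_mult_right ((\<lambda>(x,t). h t x) p)) = (\<lambda>(x, y). blinfun_mult_right (h y x))"
      by (auto simp: fun_eq_iff)
    ultimately show ?thesis by simp
  qed
  have D2: "((\<lambda>(s, y::real). LBINT z=u0..y. h z s) has_derivative
      (\<lambda>(tx, ty). Bs * tx + blinfun_mult_right (h t0 s0) ty)) (at (s0, t0) within UNIV \<times> UNIV)"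
  proof (rule has_derivative_partialsI[where f="\<lambda>s y::real. LBINT z=u0..y. h z s"])
    show "((\<lambda>x. LBINT z=u0..t0. h z x) has_derivative (*) Bs) (at s0 within UNIV)"
      using interval_integral_parameter_DERIV[OF hc hsd hsc, of u0 t0 s0]
      unfolding Bs_def has_field_derivative_def by simp
    show "\<And>x y. x \<in> UNIV \<Longrightarrow> y \<in> UNIV \<Longrightarrow> ((\<lambda>y::real. LBINT z=u0..y. h z x)
        has_derivative blinfun_apply (blinfun_mult_right (h y x))) (at y within UNIV)"
      using interval_integral_upper_limit_DERIV[OF c1] unfolding has_field_derivative_def by simp
  qed (use hcont in auto)
  have Dg: "((\<lambda>t. (c - e*t, t)) has_derivative (\<lambda>dt. (-e*dt, dt))) (at t0)"
    by (auto intro!: derivative_eq_intros)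
  have D2': "((\<lambda>(s, y::real). LBINT z=u0..y. h z s) has_derivative
      (\<lambda>(tx, ty). Bs * tx + h t0 s0 * ty)) (at ((\<lambda>t. (c - e*t, t)) t0))"
    using D2 by (simp add: s0_def)
  from diff_chain_at[OF Dg D2']
  have "((\<lambda>t::real. LBINT z=u0..t. h z (c - e*t)) has_derivative
      (\<lambda>dt. Bs * (-e*dt) + h t0 s0 * dt)) (at t0)"
    by (simp add: o_def)
  then show ?thesis unfolding has_field_derivative_def s0_def[symmetric] Bs_def[symmetric]
    by (rule has_derivative_eq_rhs) (auto simp: fun_eq_iff algebra_simps)
qed

section \<open>Coordinate partial derivatives\<close>

lemma pd_eqI: "((\<lambda>t. F (p(j:=t))) has_real_derivative D) (at (p j)) \<Longrightarrow> pd j F p = D"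
  by (simp add: pd_def DERIV_imp_deriv)

lemma pd_const: "(\<And>t. F (p(j:=t)) = c) \<Longrightarrow> pd j F p = 0"
  by (rule pd_eqI) simp

lemma pd_cong: "(\<And>t. F (p(j:=t)) = G (p(j:=t))) \<Longrightarrow> pd j F p = pd j G p"
  by (simp add: pd_def)

lemma smooth_on_coords_DERIV:
  assumes "smooth_on_coords I F" "set js \<subseteq> I" "j \<in> I" "q \<in> RN I"
  shows "((\<lambda>t. iter_pd js F (q(j:=t))) has_real_derivative iter_pd (j#js) F q) (at (q j))"
proof -
  have "(\<lambda>t. iter_pd js F (q(j:=t))) differentiable (at (q j))"
    using assms unfolding smooth_on_coords_def by blast
  then show ?thesis by (simp add: DERIV_deriv_iff_real_differentiable[symmetric] pd_def)
qed

lemma smooth_on_coords_differentiable: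
  assumes "smooth_on_coords I F" "j \<in> I" "q \<in> RN I"
  shows "(\<lambda>t. F (q(j:=t))) differentiable (at (q j))"
  using assms unfolding smooth_on_coords_def by (metis empty_subsetI iter_pd.simps(1) list.set(1))

lemma smooth_on_coords_pd_DERIV:
  assumes "smooth_on_coords I F" "j \<in> I" "q \<in> RN I"
  shows "((\<lambda>t. F (q(j:=t))) has_real_derivative pd j F q) (at (q j))"
  using smooth_on_coords_DERIV[OF assms(1) _ assms(2,3), of "[]"] by simp

lemma smooth_on_coords_continuous:
  assumes "smooth_on_coords I F" "set js \<subseteq> I"
  shows "continuous_on (RN I) (iter_pd js F)"
  using assms unfolding smooth_on_coords_def by blast

lemma DERIV_coordinate_affine:
  assumes "((\<lambda>y. F (q(j:=y))) has_real_derivative D) (at (q j))" "a*t0 + b = q j"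
  shows "((\<lambda>t. F (q(j := a*t+b))) has_real_derivative a*D) (at t0)"
proof -
  have d: "((\<lambda>t. a*t+b) has_real_derivative a) (at t0)" by (auto intro!: derivative_eq_intros)
  have "((\<lambda>y. F (q(j:=y))) has_real_derivative D) (at (a*t0+b))" using assms by simp
  from DERIV_chain2[OF this d] show ?thesis by (simp add: mult.commute)
qed

section \<open>The coordinate projections\<close>

lemma noV_RN: "noV N q \<in> RN ({1} \<union> {3..N})" by (auto simp: noV_def RN_def)
lemma xs_RN: "xs N q \<in> RN {3..N}" by (auto simp: xs_def RN_def)
lemma sh_RN: "N \<ge> 3 \<Longrightarrow> sh N \<epsilon> q \<in> RN {3..N}" by (auto simp: sh_def RN_def)

lemma noV_upd_1: "noV N (q(1:=t)) = (noV N q)(1:=t)" by (auto simp: noV_def fun_eq_iff)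
lemma noV_upd_x: "j \<in> {3..N} \<Longrightarrow> noV N (q(j:=t)) = (noV N q)(j:=t)" by (auto simp: noV_def fun_eq_iff)
lemma noV_upd_2: "noV N (q(2:=t)) = noV N q" by (auto simp: noV_def fun_eq_iff)
lemma xs_upd_1: "xs N (q(1:=t)) = xs N q" by (auto simp: xs_def fun_eq_iff)
lemma xs_upd_2: "xs N (q(2:=t)) = xs N q" by (auto simp: xs_def fun_eq_iff)
lemma xs_upd_x: "j \<in> {3..N} \<Longrightarrow> xs N (q(j:=t)) = (xs N q)(j:=t)" by (auto simp: xs_def fun_eq_iff)
lemma sh_upd_1: "sh N \<epsilon> (q(1:=t)) = (sh N \<epsilon> q)(3 := (-\<epsilon>)*t + q 3)" by (auto simp: sh_def fun_eq_iff)
lemma sh_upd_3: "N \<ge> 3 \<Longrightarrow> sh N \<epsilon> (q(3:=t)) = (sh N \<epsilon> q)(3 := 1*t + (-\<epsilon> * q 1))"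
  by (auto simp: sh_def fun_eq_iff)
lemma sh_upd_2: "sh N \<epsilon> (q(2:=t)) = sh N \<epsilon> q" by (auto simp: sh_def fun_eq_iff)
lemma noV_at: "noV N q 1 = q 1" "j \<in> {3..N} \<Longrightarrow> noV N q j = q j" by (auto simp: noV_def)
lemma xs_at: "j \<in> {3..N} \<Longrightarrow> xs N q j = q j" by (auto simp: xs_def)
lemma sh_at: "N \<ge> 3 \<Longrightarrow> sh N \<epsilon> q 3 = q 3 - \<epsilon> * q 1" by (auto simp: sh_def)

text \<open>The index 1 is sometimes displayed as Suc 0, so the u-rules are also kept in that form.\<close>
lemmas coord_u_simps = noV_upd_1 noV_upd_1[unfolded One_nat_def] xs_upd_1 xs_upd_1[unfolded One_nat_def]
  sh_upd_1 sh_upd_1[unfolded One_nat_def] noV_at noV_at(1)[unfolded One_nat_def]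
  sh_at sh_at[unfolded One_nat_def]

lemma pd_xs: "n \<in> {3..N} \<Longrightarrow> pd n (\<lambda>r. f (xs N r)) q = pd n f (xs N q)"
  by (simp add: pd_def xs_upd_x xs_at)

lemma sh_DERIV:
  assumes N3: "N \<ge> 3"
    and d: "((\<lambda>y. F ((sh N \<epsilon> p)(3:=y))) has_real_derivative D) (at (sh N \<epsilon> p 3))"
  shows "((\<lambda>t. F (sh N \<epsilon> (p(1:=t)))) has_real_derivative (-\<epsilon>) * D) (at (p 1))"
    and "((\<lambda>t. F (sh N \<epsilon> (p(3:=t)))) has_real_derivative 1 * D) (at (p 3))"
  unfolding sh_upd_1 sh_upd_3[OF N3]
  by (rule DERIV_coordinate_affine[OF d]; simp add: sh_at N3)+

lemma transport_sh:
  assumes N3: "N \<ge> 3"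
    and "(\<lambda>y. F ((sh N \<epsilon> p)(3:=y))) differentiable (at (sh N \<epsilon> p 3))"
  shows "pd 1 (\<lambda>q. F (sh N \<epsilon> q)) p + \<epsilon> * pd 3 (\<lambda>q. F (sh N \<epsilon> q)) p = 0"
proof -
  obtain D where d: "((\<lambda>y. F ((sh N \<epsilon> p)(3:=y))) has_real_derivative D) (at (sh N \<epsilon> p 3))"
    using assms(2) by (auto simp: real_differentiable_def)
  show ?thesis
    using pd_eqI[OF sh_DERIV(1)[OF N3 d]] pd_eqI[OF sh_DERIV(2)[OF N3 d]] by simp
qed

section \<open>The Lie derivative of a transport field\<close>

lemma lie_derivative_transport_field:
  fixes X :: "(nat \<Rightarrow> real) \<Rightarrow> nat \<Rightarrow> real" and g :: "nat \<Rightarrow> nat \<Rightarrow> (nat \<Rightarrow> real) \<Rightarrow> real"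
  assumes N3: "N \<ge> 3"
    and X_eq: "\<And>q. X q = (\<lambda>c. if c = 1 then 1 else if c = 2 then - K q else if c = 3 then \<epsilon> else 0)"
    and K_DERIV: "\<And>j. j \<in> {1..N} \<Longrightarrow> ((\<lambda>t. K (p(j:=t))) has_real_derivative dK j) (at (p j))"
    and g_v: "pd 2 (g a b) p = 0"
    and ab: "a \<in> {1..N}" "b \<in> {1..N}"
  shows "(\<Sum>c\<in>{1..N}. X p c * pd c (g a b) p + g c b p * pd a (\<lambda>q. X q c) p
            + g a c p * pd b (\<lambda>q. X q c) p)
       = pd 1 (g a b) p + \<epsilon> * pd 3 (g a b) p - g 2 b p * dK a - g a 2 p * dK b"
proof -
  have pdX: "pd j (\<lambda>q. X q c) p = (if c = 2 then - dK j else 0)" if "j \<in> {1..N}" for j c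
  proof (cases "c = 2")
    case True
    show ?thesis unfolding True X_eq by (simp, rule pd_eqI, rule DERIV_minus, rule K_DERIV[OF that])
  next
    case False
    then show ?thesis by (simp add: pd_const[where c = "X p c"] X_eq)
  qed
  have "(\<Sum>c\<in>{1..N}. X p c * pd c (g a b) p + g c b p * pd a (\<lambda>q. X q c) p
            + g a c p * pd b (\<lambda>q. X q c) p)
      = (\<Sum>c\<in>{1..N}. (if c = 1 then pd 1 (g a b) p else 0) + (if c = 3 then \<epsilon> * pd 3 (g a b) p else 0)
          + (if c = 2 then - (g 2 b p * dK a) - g a 2 p * dK b else 0))"
  proof (rule sum.cong)
    fix c assume "c \<in> {1..N}"
    then show "X p c * pd c (g a b) p + g c b p * pd a (\<lambda>q. X q c) p + g a c p * pd b (\<lambda>q. X q c) p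
      = (if c = 1 then pd 1 (g a b) p else 0) + (if c = 3 then \<epsilon> * pd 3 (g a b) p else 0)
          + (if c = 2 then - (g 2 b p * dK a) - g a 2 p * dK b else 0)"
      unfolding pdX[OF ab(1)] pdX[OF ab(2)] using g_v by (auto simp: X_eq)
  qed simp
  also have "\<dots> = pd 1 (g a b) p + \<epsilon> * pd 3 (g a b) p - g 2 b p * dK a - g a 2 p * dK b"
    using N3 by (simp add: sum.distrib)
  finally show ?thesis .
qed

section \<open>The Killing field of the metric\<close>

locale kundt_killing =
  fixes N :: nat and \<epsilon> u0 :: real
    and m :: "nat \<Rightarrow> nat \<Rightarrow> (nat \<Rightarrow> real) \<Rightarrow> real"
    and H F2 f \<Phi> :: "(nat \<Rightarrow> real) \<Rightarrow> real"
    and E :: "nat \<Rightarrow> (nat \<Rightarrow> real) \<Rightarrow> real"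
  assumes N3: "N \<ge> 3"
    and eps: "\<epsilon> \<noteq> 0"
    and m_smooth: "\<And>i e. i \<in> {3..N} \<Longrightarrow> e \<in> {3..N} \<Longrightarrow> smooth_on_coords {3..N} (m i e)"
    and m_tri: "\<And>i e y. i \<in> {3..N} \<Longrightarrow> e \<in> {3..N} \<Longrightarrow> e < i \<Longrightarrow> m i e y = 0"
    and m_diag: "\<And>i y. i \<in> {3..N} \<Longrightarrow> y \<in> RN {3..N} \<Longrightarrow> m i i y > 0"
    and H_smooth: "smooth_on_coords ({1} \<union> {3..N}) H"
    and F2_smooth: "smooth_on_coords {3..N} F2"
    and E_smooth: "\<And>n. n \<in> {4..N} \<Longrightarrow> smooth_on_coords {3..N} (E n)"
    and f_smooth: "smooth_on_coords {3..N} f"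
    and Phi_smooth: "smooth_on_coords ({1} \<union> {3..N}) \<Phi>"
    and Phi_du: "\<And>q. q \<in> RN ({1} \<union> {3..N}) \<Longrightarrow> pd 1 \<Phi> q = pd 3 H q"
begin

abbreviation "g \<equiv> gmet N \<epsilon> m H F2 f \<Phi> E u0"
abbreviation "X \<equiv> Xv N \<epsilon> m H F2 f \<Phi>"
abbreviation "W \<equiv> What N \<epsilon> H F2 f \<Phi> E u0"

lemma indices: "1 \<in> {1..N}" "2 \<in> {1..N}" "3 \<in> {1..N}" "3 \<in> {3..N}"
  "1 \<in> {1} \<union> {3..N}" "3 \<in> {1} \<union> {3..N}"
  using N3 by auto

text \<open>The v-component of X is -K.\<close>
definition K :: "(nat \<Rightarrow> real) \<Rightarrow> real" where
  "K q = H (noV N q) + \<epsilon> * \<Phi> (noV N q) + f (xs N q)"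

definition dK :: "nat \<Rightarrow> (nat \<Rightarrow> real) \<Rightarrow> real" where
  "dK a p = (if a = 1 then pd 1 H (noV N p) + \<epsilon> * pd 1 \<Phi> (noV N p) else if a = 2 then 0
     else pd a H (noV N p) + \<epsilon> * pd a \<Phi> (noV N p) + pd a f (xs N p))"

text \<open>In coordinates X = d_u + eps d_3 - K d_v; this uses m_33 \<noteq> 0.\<close>
lemma X_eq: "X q = (\<lambda>c. if c = 1 then 1 else if c = 2 then - K q else if c = 3 then \<epsilon> else 0)"
proof -
  have "m 3 3 (sh N \<epsilon> q) > 0" using m_diag[of 3 "sh N \<epsilon> q"] N3 sh_RN by auto
  then show ?thesis using eps unfolding Xv_def nv_def ellv_def m3v_def W3_def K_def
    by (auto simp: fun_eq_iff field_simps)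
qed

lemma K_DERIV:
  assumes a: "a \<in> {1..N}"
  shows "((\<lambda>t. K (p(a:=t))) has_real_derivative dK a p) (at (p a))"
proof -
  consider "a = 1" | "a = 2" | "a \<in> {3..N}" using a by fastforce
  then show ?thesis
  proof cases
    case 1
    have "(\<lambda>t. K (p(1:=t))) = (\<lambda>t. H ((noV N p)(1:=t)) + \<epsilon> * \<Phi> ((noV N p)(1:=t)) + f (xs N p))"
      by (simp add: K_def coord_u_simps)
    moreover have "((\<lambda>t. H ((noV N p)(1:=t))) has_real_derivative pd 1 H (noV N p)) (at (p 1))"
      "((\<lambda>t. \<Phi> ((noV N p)(1:=t))) has_real_derivative pd 1 \<Phi> (noV N p)) (at (p 1))"
      using smooth_on_coords_pd_DERIV[OF H_smooth indices(5) noV_RN]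
        smooth_on_coords_pd_DERIV[OF Phi_smooth indices(5) noV_RN] by (simp_all add: coord_u_simps)
    ultimately show ?thesis unfolding 1 dK_def by (auto intro!: derivative_eq_intros)
  next
    case 2
    have "(\<lambda>t. K (p(2:=t))) = (\<lambda>t. K p)" by (simp add: K_def noV_upd_2 xs_upd_2)
    then show ?thesis unfolding 2 dK_def by simp
  next
    case 3
    have "(\<lambda>t. K (p(a:=t))) = (\<lambda>t. H ((noV N p)(a:=t)) + \<epsilon> * \<Phi> ((noV N p)(a:=t)) + f ((xs N p)(a:=t)))"
      using 3 by (simp add: K_def noV_upd_x xs_upd_x)
    moreover have "((\<lambda>t. H ((noV N p)(a:=t))) has_real_derivative pd a H (noV N p)) (at (p a))"
      "((\<lambda>t. \<Phi> ((noV N p)(a:=t))) has_real_derivative pd a \<Phi> (noV N p)) (at (p a))"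
      "((\<lambda>t. f ((xs N p)(a:=t))) has_real_derivative pd a f (xs N p)) (at (p a))"
      using smooth_on_coords_pd_DERIV[OF H_smooth _ noV_RN, of a]
        smooth_on_coords_pd_DERIV[OF Phi_smooth _ noV_RN, of a]
        smooth_on_coords_pd_DERIV[OF f_smooth 3 xs_RN] 3 by (simp_all add: noV_at xs_at)
    ultimately show ?thesis using 3 unfolding dK_def by (auto intro!: derivative_eq_intros)
  qed
qed

text \<open>Transport of hatW_3 = Phi + (F_2 + f)/eps: the F_2 terms cancel and d_u Phi = d_3 H.\<close>
lemma W3_transport: "pd 1 (W 3) p + \<epsilon> * pd 3 (W 3) p = dK 3 p"
proof -
  have W1: "(\<lambda>t. W 3 (p(1:=t))) = (\<lambda>t. \<Phi> ((noV N p)(1:=t)) + (F2 (sh N \<epsilon> (p(1:=t))) + f (xs N p))/\<epsilon>)"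
    by (simp add: What_def W3_def coord_u_simps)
  have W3: "(\<lambda>t. W 3 (p(3:=t))) = (\<lambda>t. \<Phi> ((noV N p)(3:=t)) + (F2 (sh N \<epsilon> (p(3:=t))) + f ((xs N p)(3:=t)))/\<epsilon>)"
    using indices by (simp add: What_def W3_def noV_upd_x xs_upd_x)
  have dP1: "((\<lambda>t. \<Phi> ((noV N p)(1:=t))) has_real_derivative pd 1 \<Phi> (noV N p)) (at (p 1))"
   and dP3: "((\<lambda>t. \<Phi> ((noV N p)(3:=t))) has_real_derivative pd 3 \<Phi> (noV N p)) (at (p 3))"
    using smooth_on_coords_pd_DERIV[OF Phi_smooth indices(5) noV_RN]
      smooth_on_coords_pd_DERIV[OF Phi_smooth indices(6) noV_RN]
    by (simp_all add: coord_u_simps noV_at(2)[OF indices(4)])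
  have dF: "((\<lambda>t. F2 ((sh N \<epsilon> p)(3:=t))) has_real_derivative pd 3 F2 (sh N \<epsilon> p)) (at (sh N \<epsilon> p 3))"
    using smooth_on_coords_pd_DERIV[OF F2_smooth indices(4) sh_RN[OF N3]] .
  have df3: "((\<lambda>t. f ((xs N p)(3:=t))) has_real_derivative pd 3 f (xs N p)) (at (p 3))"
    using smooth_on_coords_pd_DERIV[OF f_smooth indices(4) xs_RN] by (simp add: xs_at[OF indices(4)])
  have D1: "pd 1 (W 3) p = pd 1 \<Phi> (noV N p) + ((-\<epsilon>) * pd 3 F2 (sh N \<epsilon> p) + 0) / \<epsilon>"
    by (rule pd_eqI, unfold W1) (intro DERIV_add DERIV_cdivide dP1 sh_DERIV(1)[OF N3 dF] DERIV_const)
  have D3: "pd 3 (W 3) p = pd 3 \<Phi> (noV N p) + (1 * pd 3 F2 (sh N \<epsilon> p) + pd 3 f (xs N p)) / \<epsilon>"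
    by (rule pd_eqI, unfold W3) (intro DERIV_add DERIV_cdivide dP3 sh_DERIV(2)[OF N3 dF] df3)
  have "pd 1 \<Phi> (noV N p) = pd 3 H (noV N p)" using Phi_du noV_RN by blast
  then show ?thesis unfolding D1 D3 dK_def using eps by (simp add: field_simps)
qed

text \<open>The characteristic line of d_u + eps d_3 through the point with shifted coordinate s and
  transverse coordinates p 4, ..., p N, parametrised by u = z.\<close>
definition char :: "(nat \<Rightarrow> real) \<Rightarrow> real \<Rightarrow> real \<Rightarrow> nat \<Rightarrow> real" where
  "char p z s = (\<lambda>j. if j = 1 then z else if j = 3 then s + \<epsilon>*z else if j \<in> {4..N} then p j else 0)"

lemma char_RN: "char p z s \<in> RN ({1} \<union> {3..N})"
  using N3 by (auto simp: char_def RN_def)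

lemma char_upd_3: "(char p z s)(3 := 1*\<sigma> + \<epsilon>*z) = char p z \<sigma>"
  by (auto simp: char_def fun_eq_iff)

lemma xs_char_upd_3: "(xs N (char p z s))(3 := 1*\<sigma> + \<epsilon>*z) = xs N (char p z \<sigma>)"
  using N3 by (auto simp: char_def xs_def fun_eq_iff)

lemma char_continuous: "continuous_on UNIV (\<lambda>x. char p (fst x) (snd x))"
  unfolding char_def
  by (intro continuous_on_coordinatewise_then_product, rename_tac i,
      case_tac "i = 1"; case_tac "i = 3"; case_tac "i \<in> {4..N}") (auto intro!: continuous_intros)

lemma xs_char_continuous: "continuous_on UNIV (\<lambda>x. xs N (char p (fst x) (snd x)))"
  unfolding char_def xs_def
  by (intro continuous_on_coordinatewise_then_product, rename_tac i,
      case_tac "i = 1"; case_tac "i = 3"; case_tac "i \<in> {3..N}") (auto intro!: continuous_intros)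

definition Lchar :: "(nat \<Rightarrow> real) \<Rightarrow> nat \<Rightarrow> real \<Rightarrow> real \<Rightarrow> real" where
  "Lchar p e z s = Ln N \<epsilon> H \<Phi> f e (char p z s)"

definition Lchar_ds :: "(nat \<Rightarrow> real) \<Rightarrow> nat \<Rightarrow> real \<Rightarrow> real \<Rightarrow> real" where
  "Lchar_ds p e z s = iter_pd [3,e] H (char p z s) + \<epsilon> * iter_pd [3,e] \<Phi> (char p z s)
     + iter_pd [3,e] f (xs N (char p z s))"

lemma Lchar_upd:
  assumes "j \<notin> {4..N}"
  shows "Lchar (p(j:=t)) = Lchar p"
proof -
  have "char (p(j:=t)) = char p" using assms by (auto simp: char_def fun_eq_iff)
  then show ?thesis by (intro ext) (simp add: Lchar_def)
qed

lemma Lchar_eq: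
  assumes "e \<in> {3..N}"
  shows "Lchar p e z s = iter_pd [e] H (char p z s) + \<epsilon> * iter_pd [e] \<Phi> (char p z s)
     + iter_pd [e] f (xs N (char p z s))"
  using assms by (simp add: Lchar_def Ln_def pd_xs)

lemma Lchar_continuous:
  assumes e: "e \<in> {3..N}"
  shows "continuous_on UNIV (\<lambda>(z,s). Lchar p e z s)"
    and "continuous_on UNIV (\<lambda>(z,s). Lchar_ds p e z s)"
proof -
  have cP: "continuous_on UNIV (\<lambda>x. iter_pd js F (char p (fst x) (snd x)))"
    if "smooth_on_coords ({1} \<union> {3..N}) F" "set js \<subseteq> {1} \<union> {3..N}" for F js
    by (rule continuous_on_compose2[OF smooth_on_coords_continuous[OF that] char_continuous])
       (use char_RN in auto)
  have cQ: "continuous_on UNIV (\<lambda>x. iter_pd js F (xs N (char p (fst x) (snd x))))"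
    if "smooth_on_coords {3..N} F" "set js \<subseteq> {3..N}" for F js
    by (rule continuous_on_compose2[OF smooth_on_coords_continuous[OF that] xs_char_continuous])
       (use xs_RN in auto)
  show "continuous_on UNIV (\<lambda>(z,s). Lchar p e z s)"
    unfolding Lchar_eq[OF e] split_beta
    using e indices by (intro continuous_intros cP cQ H_smooth Phi_smooth f_smooth) auto
  show "continuous_on UNIV (\<lambda>(z,s). Lchar_ds p e z s)"
    unfolding Lchar_ds_def split_beta
    using e indices by (intro continuous_intros cP cQ H_smooth Phi_smooth f_smooth) auto
qed

lemma Lchar_DERIV:
  assumes e: "e \<in> {3..N}"
  shows "((\<lambda>s. Lchar p e z s) has_real_derivative Lchar_ds p e z s) (at s)"
proof -
  have at3: "char p z s 3 = 1 * s + \<epsilon>*z" "xs N (char p z s) 3 = 1 * s + \<epsilon>*z"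
    using N3 by (auto simp: char_def xs_def)
  have line: "((\<lambda>\<sigma>. iter_pd [e] F (q (3 := 1*\<sigma> + \<epsilon>*z))) has_real_derivative
      1 * iter_pd [3,e] F q) (at s)"
    if "smooth_on_coords I F" "{3, e} \<subseteq> I" "q \<in> RN I" "q 3 = 1 * s + \<epsilon>*z" for F I q
    using that by (intro DERIV_coordinate_affine smooth_on_coords_DERIV) auto
  have dH: "((\<lambda>\<sigma>. iter_pd [e] H (char p z \<sigma>)) has_real_derivative 1 * iter_pd [3,e] H (char p z s)) (at s)"
    by (rule line[OF H_smooth _ char_RN at3(1), unfolded char_upd_3]) (use e in auto)
  have dP: "((\<lambda>\<sigma>. iter_pd [e] \<Phi> (char p z \<sigma>)) has_real_derivative 1 * iter_pd [3,e] \<Phi> (char p z s)) (at s)"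
    by (rule line[OF Phi_smooth _ char_RN at3(1), unfolded char_upd_3]) (use e in auto)
  have df: "((\<lambda>\<sigma>. iter_pd [e] f (xs N (char p z \<sigma>))) has_real_derivative
      1 * iter_pd [3,e] f (xs N (char p z s))) (at s)"
    by (rule line[OF f_smooth _ xs_RN at3(2), unfolded xs_char_upd_3]) (use e in auto)
  show ?thesis
    using DERIV_add[OF DERIV_add[OF dH DERIV_cmult[OF dP, of \<epsilon>]] df]
    by (simp add: Lchar_eq[OF e] Lchar_ds_def)
qed

lemma Wn_eq:
  assumes "e \<in> {4..N}"
  shows "W e q = (LBINT z=u0..q 1. Lchar q e z (q 3 - \<epsilon> * q 1)) + E e (sh N \<epsilon> q)"
  unfolding What_def Wn_def Lchar_def char_def using assms by simp

text \<open>Transport of hatW_n: the derivative of the moving upper limit yields L_n at the point,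
  the derivatives through the shifted coordinate cancel.\<close>
lemma Wn_transport:
  assumes n: "e \<in> {4..N}"
  shows "pd 1 (W e) p + \<epsilon> * pd 3 (W e) p = dK e p"
proof -
  have e: "e \<in> {3..N}" "e \<noteq> 1" "e \<noteq> 3" using n by auto
  note hc = Lchar_continuous(1)[OF e(1)] and hsc = Lchar_continuous(2)[OF e(1)]
    and hsd = Lchar_DERIV[OF e(1)]
  define s0 where "s0 = p 3 - \<epsilon> * p 1"
  define Bs where "Bs = (LBINT z=u0..p 1. Lchar_ds p e z s0)"
  have W1: "(\<lambda>t. W e (p(1:=t))) = (\<lambda>t. (LBINT z=u0..t. Lchar p e z (p 3 - \<epsilon>*t)) + E e (sh N \<epsilon> (p(1:=t))))"
    using n by (simp add: Wn_eq Lchar_upd)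
  have W3: "(\<lambda>t. W e (p(3:=t))) = (\<lambda>t. (LBINT z=u0..p 1. Lchar p e z (t - \<epsilon>*p 1)) + E e (sh N \<epsilon> (p(3:=t))))"
    using n by (simp add: Wn_eq Lchar_upd)
  have dE: "((\<lambda>t. E e ((sh N \<epsilon> p)(3:=t))) has_real_derivative pd 3 (E e) (sh N \<epsilon> p)) (at (sh N \<epsilon> p 3))"
    using smooth_on_coords_pd_DERIV[OF E_smooth[OF n] indices(4) sh_RN[OF N3]] .
  have dI1: "((\<lambda>t::real. LBINT z=u0..t. Lchar p e z (p 3 - \<epsilon>*t)) has_real_derivative
      (Lchar p e (p 1) s0 - \<epsilon> * Bs)) (at (p 1))"
    unfolding s0_def Bs_def by (rule interval_integral_moving_DERIV[OF hc hsd hsc])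
  have dI3: "((\<lambda>t. LBINT z=u0..p 1. Lchar p e z (t - \<epsilon>*p 1)) has_real_derivative Bs * 1) (at (p 3))"
  proof -
    have "((\<lambda>s. LBINT z=u0..p 1. Lchar p e z s) has_real_derivative Bs) (at (p 3 - \<epsilon>*p 1))"
      unfolding Bs_def s0_def by (rule interval_integral_parameter_DERIV[OF hc hsd hsc])
    moreover have "((\<lambda>t. t - \<epsilon> * p 1) has_real_derivative 1) (at (p 3))"
      by (auto intro!: derivative_eq_intros)
    ultimately show ?thesis
      by (rule DERIV_chain2[where f="\<lambda>s. LBINT z=u0..p 1. Lchar p e z s" and g="\<lambda>t. t - \<epsilon>*p 1"])
  qed
  have D1: "pd 1 (W e) p = (Lchar p e (p 1) s0 - \<epsilon> * Bs) + (-\<epsilon>) * pd 3 (E e) (sh N \<epsilon> p)"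
    by (rule pd_eqI, unfold W1) (intro DERIV_add dI1 sh_DERIV(1)[OF N3 dE])
  have D3: "pd 3 (W e) p = Bs * 1 + 1 * pd 3 (E e) (sh N \<epsilon> p)"
    by (rule pd_eqI, unfold W3) (intro DERIV_add dI3 sh_DERIV(2)[OF N3 dE])
  have "char p (p 1) s0 = noV N p" using N3 by (auto simp: char_def s0_def noV_def fun_eq_iff)
  moreover have "xs N (noV N p) = xs N p" by (auto simp: xs_def noV_def fun_eq_iff)
  ultimately have "Lchar p e (p 1) s0 = dK e p"
    using e by (simp add: Lchar_def Ln_def pd_xs dK_def)
  then show ?thesis unfolding D1 D3 by (simp add: algebra_simps)
qed

lemma What_transport:
  assumes "e \<in> {3..N}"
  shows "pd 1 (W e) p + \<epsilon> * pd 3 (W e) p = dK e p"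
  using W3_transport Wn_transport assms by (cases "e = 3") auto

lemma metric_v_row: "b \<in> {1..N} \<Longrightarrow> g 2 b q = (if b = 1 then 1 else 0)"
  and metric_v_column: "a \<in> {1..N} \<Longrightarrow> g a 2 q = (if a = 1 then 1 else 0)"
  by (auto simp: gmet_def)

lemma metric_transport:
  assumes ab: "a \<in> {1..N}" "b \<in> {1..N}"
  shows "pd 1 (g a b) p + \<epsilon> * pd 3 (g a b) p = g 2 b p * dK a p + g a 2 p * dK b p"
proof -
  consider "a = 2 \<or> b = 2" | "a \<in> {3..N} \<and> b \<in> {3..N}" | "a = 1 \<and> b = 1"
    | "a = 1 \<and> b \<in> {3..N}" | "a \<in> {3..N} \<and> b = 1"
    using ab by fastforce
  then show ?thesis
  proof cases
    case 1
    then have "pd 1 (g a b) p = 0" "pd 3 (g a b) p = 0"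
      by (auto intro!: pd_const[where c="g a b p"] simp: gmet_def)
    then show ?thesis using 1 ab by (auto simp: metric_v_row metric_v_column dK_def)
  next
    case 2
    text \<open>The block g_ef is a function of the shifted coordinates.\<close>
    define S where "S = (\<lambda>y. \<Sum>i\<in>{3..N}. m i a y * m i b y)"
    have "g a b = (\<lambda>q. S (sh N \<epsilon> q))" using 2 by (auto simp: gmet_def S_def fun_eq_iff)
    moreover have "(\<lambda>y. S ((sh N \<epsilon> p)(3:=y))) differentiable (at (sh N \<epsilon> p 3))"
      unfolding S_def using 2
      by (intro differentiable_sum ballI differentiable_mult
          smooth_on_coords_differentiable[OF m_smooth indices(4) sh_RN[OF N3]]) auto
    ultimately have "pd 1 (g a b) p + \<epsilon> * pd 3 (g a b) p = 0"
      using transport_sh[OF N3] by simp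
    then show ?thesis using 2 by (auto simp: metric_v_row metric_v_column)
  next
    case 3
    have "(\<lambda>t. g 1 1 (p(1:=t))) = (\<lambda>t. 2 * H ((noV N p)(1:=t)))"
      by (simp add: gmet_def coord_u_simps)
    then have d1: "pd 1 (g a b) p = 2 * pd 1 H (noV N p)"
      using 3 smooth_on_coords_pd_DERIV[OF H_smooth indices(5) noV_RN]
      by (auto intro!: pd_eqI DERIV_cmult simp: coord_u_simps)
    have "(\<lambda>t. g 1 1 (p(3:=t))) = (\<lambda>t. 2 * H ((noV N p)(3:=t)))"
      using indices by (simp add: gmet_def noV_upd_x)
    then have d3: "pd 3 (g a b) p = 2 * pd 3 H (noV N p)"
      using 3 smooth_on_coords_pd_DERIV[OF H_smooth indices(6) noV_RN]
      by (auto intro!: pd_eqI DERIV_cmult simp: noV_at(2)[OF indices(4)])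
    have "pd 1 \<Phi> (noV N p) = pd 3 H (noV N p)" using Phi_du noV_RN by blast
    then show ?thesis using 3 indices d1 d3
      by (simp add: metric_v_row metric_v_column dK_def algebra_simps)
  next
    case 4
    have "pd j (g a b) p = pd j (W b) p" for j
      using 4 by (intro pd_cong) (auto simp: gmet_def)
    then show ?thesis using 4 What_transport[of b p] indices
      by (auto simp: metric_v_row metric_v_column)
  next
    case 5
    have "pd j (g a b) p = pd j (W a) p" for j
      using 5 by (intro pd_cong) (auto simp: gmet_def)
    then show ?thesis using 5 What_transport[of a p] indices
      by (auto simp: metric_v_row metric_v_column)
  qed
qed

theorem killing_field: "killing N g X"
  unfolding killing_def
proof (intro ballI)
  fix p a b assume ab: "a \<in> {1..N}" "b \<in> {1..N}"
  have "pd 2 (g a b) p = 0"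
    by (rule pd_const[where c="g a b p"])
       (simp add: gmet_def What_def W3_def Wn_def noV_upd_2 xs_upd_2 sh_upd_2 cong: if_cong)
  then show "(\<Sum>c\<in>{1..N}. X p c * pd c (g a b) p + g c b p * pd a (\<lambda>q. X q c) p
      + g a c p * pd b (\<lambda>q. X q c) p) = 0"
    using lie_derivative_transport_field[where dK="\<lambda>j. dK j p", OF N3 X_eq K_DERIV _ ab] metric_transport[OF ab]
    by simp
qed

text \<open>Only the components X^u = 1, X^v = -K, X^3 = eps are non-zero, and g_33 = m_33^2
  because m^i_3 = 0 for i > 3.\<close>
theorem norm_of_killing_field:
  "gnorm N g X p = 2 * F2 (sh N \<epsilon> p) + \<epsilon>\<^sup>2 * (m 3 3 (sh N \<epsilon> p))\<^sup>2"
proof -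
  have X0: "X p a = 0" if "a \<notin> {1,2,3}" for a using that by (simp add: X_eq)
  have inner: "(\<Sum>b\<in>{1..N}. g a b p * X p a * X p b) = (\<Sum>b\<in>{1,2,3}. g a b p * X p a * X p b)" for a
    by (rule sum.mono_neutral_right) (use N3 X0 in auto)
  have "gnorm N g X p = (\<Sum>a\<in>{1,2,3}. \<Sum>b\<in>{1,2,3}. g a b p * X p a * X p b)"
    unfolding gnorm_def inner by (rule sum.mono_neutral_right) (use N3 X0 in auto)
  moreover have "g 3 3 p = (m 3 3 (sh N \<epsilon> p))\<^sup>2"
  proof -
    have "g 3 3 p = (\<Sum>i\<in>{3..N}. m i 3 (sh N \<epsilon> p) * m i 3 (sh N \<epsilon> p))"
      using N3 by (simp add: gmet_def)
    also have "\<dots> = (\<Sum>i\<in>{3}. m i 3 (sh N \<epsilon> p) * m i 3 (sh N \<epsilon> p))"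
      by (rule sum.mono_neutral_right) (use N3 m_tri in auto)
    finally show ?thesis by (simp add: power2_eq_square)
  qed
  moreover have "g 1 1 p = 2 * H (noV N p)" "g 1 2 p = 1" "g 2 1 p = 1" "g 2 2 p = 0"
    "g 1 3 p = W3 N \<epsilon> F2 f \<Phi> p" "g 3 1 p = W3 N \<epsilon> F2 f \<Phi> p" "g 2 3 p = 0" "g 3 2 p = 0"
    using N3 by (simp_all add: gmet_def What_def)
  ultimately show ?thesis using eps
    by (simp add: X_eq K_def W3_def field_simps power2_eq_square)
qed

end

theorem mainTheorem5:
  fixes N :: nat and \<epsilon> u0 :: real
    and m :: "nat \<Rightarrow> nat \<Rightarrow> (nat \<Rightarrow> real) \<Rightarrow> real"
    and H F2 f \<Phi> :: "(nat \<Rightarrow> real) \<Rightarrow> real"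
    and E :: "nat \<Rightarrow> (nat \<Rightarrow> real) \<Rightarrow> real"
  assumes N3: "N \<ge> 3"
    and eps: "\<epsilon> \<noteq> 0"
    and m_smooth: "\<And>i e. i \<in> {3..N} \<Longrightarrow> e \<in> {3..N} \<Longrightarrow> smooth_on_coords {3..N} (m i e)"
    and m_tri: "\<And>i e y. i \<in> {3..N} \<Longrightarrow> e \<in> {3..N} \<Longrightarrow> e < i \<Longrightarrow> m i e y = 0"
    and m_diag: "\<And>i y. i \<in> {3..N} \<Longrightarrow> y \<in> RN {3..N} \<Longrightarrow> m i i y > 0"
    and H_smooth: "smooth_on_coords ({1} \<union> {3..N}) H"
    and F2_smooth: "smooth_on_coords {3..N} F2"
    and E_smooth: "\<And>n. n \<in> {4..N} \<Longrightarrow> smooth_on_coords {3..N} (E n)"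
    and f_smooth: "smooth_on_coords {3..N} f"
    and Phi_smooth: "smooth_on_coords ({1} \<union> {3..N}) \<Phi>"
    and Phi_du: "\<And>q. q \<in> RN ({1} \<union> {3..N}) \<Longrightarrow> pd 1 \<Phi> q = pd 3 H q"
  shows "killing N (gmet N \<epsilon> m H F2 f \<Phi> E u0) (Xv N \<epsilon> m H F2 f \<Phi>)
    \<and> (\<forall>p\<in>RN {1..N}. gnorm N (gmet N \<epsilon> m H F2 f \<Phi> E u0) (Xv N \<epsilon> m H F2 f \<Phi>) p
          = 2 * F2 (sh N \<epsilon> p) + \<epsilon>\<^sup>2 * (m 3 3 (sh N \<epsilon> p))\<^sup>2)
    \<and> ((\<forall>y\<in>RN {3..N}. F2 y \<le> - (1/2) * \<epsilon>\<^sup>2 * (m 3 3 y)\<^sup>2) \<longrightarrow>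
        (\<forall>p\<in>RN {1..N}. gnorm N (gmet N \<epsilon> m H F2 f \<Phi> E u0) (Xv N \<epsilon> m H F2 f \<Phi>) p \<le> 0))"
proof -
  interpret kundt_killing N \<epsilon> u0 m H F2 f \<Phi> E
    using assms by unfold_locales
  text \<open>The bound on F_2 holds at every point because the shifted coordinates lie in R^{3..N}.\<close>
  have "gnorm N g X p \<le> 0" if "\<forall>y\<in>RN {3..N}. F2 y \<le> - (1/2) * \<epsilon>\<^sup>2 * (m 3 3 y)\<^sup>2" for p
  proof -
    have "F2 (sh N \<epsilon> p) \<le> - (1/2) * \<epsilon>\<^sup>2 * (m 3 3 (sh N \<epsilon> p))\<^sup>2"
      using that sh_RN[OF N3] by blast
    then show ?thesis by (simp add: norm_of_killing_field)
  qed
  then show ?thesis using killing_field norm_of_killing_field by blast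
qed

end
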